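(* Let $m\geq 1$ be an integer. For all integers $n\geq 1$ and all real $x,y\in(0,\pi)$, $$\sum_{k=0}^n \binom{n-k+m}{m}\frac{\sin((2k+1)x)\,\sin((2k+1)y)}{2k+1}>0.$$ The lower bound $0$ is sharp. *)

theory Defs
  imports Complex_Main
begin

definition S :: "nat \<Rightarrow> nat \<Rightarrow> real \<Rightarrow> real \<Rightarrow> real" where
  "S m n x y = (\<Sum>k=0..n. real ((n - k + m) choose m) *
      (sin (real (2*k+1) * x) * sin (real (2*k+1) * y)) / real (2*k+1))"

end

theory Submission
  imports Defs
begin

text \<open>
  By the product-to-sum formula, \<open>2 S m n x y = C m n (x - y) - C m n (x + y)\<close> for the cosine
  sum \<open>C m n t = \<Sum>k\<le>n. binom(n-k+m, m) cos((2k+1)t) / (2k+1)\<close>, whose derivative is minus the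
  sine sum \<open>T m n t = \<Sum>k\<le>n. binom(n-k+m, m) sin((2k+1)t)\<close>. For \<open>m = 0\<close> one has
  \<open>sin t \<cdot> T 0 n t = sin\<^sup>2((n+1)t) \<ge> 0\<close>, and Pascal's rule gives
  \<open>T (m+1) (n+1) = T (m+1) n + T m (n+1)\<close>, so \<open>T m n > 0\<close> on \<open>(0, \<pi>)\<close> for \<open>m \<ge> 1\<close>.
  Hence \<open>C m n\<close> is strictly decreasing on \<open>[0, \<pi>]\<close>; being even and symmetric about \<open>\<pi>\<close>,
  this gives \<open>C m n (x - y) > C m n (x + y)\<close>. Sharpness: \<open>S m n x y \<rightarrow> 0\<close> as \<open>x \<rightarrow> 0\<close>.
\<close>

definition binom_sin_sum :: "nat \<Rightarrow> nat \<Rightarrow> real \<Rightarrow> real" where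
  "binom_sin_sum m n t = (\<Sum>k=0..n. real ((n - k + m) choose m) * sin (real (2*k+1) * t))"

definition binom_cos_sum :: "nat \<Rightarrow> nat \<Rightarrow> real \<Rightarrow> real" where
  "binom_cos_sum m n t =
     (\<Sum>k=0..n. real ((n - k + m) choose m) * cos (real (2*k+1) * t) / real (2*k+1))"

lemma sin_add_mult_sin_diff: "sin (a + b) * sin (a - b) = sin a ^ 2 - sin (b::real) ^ 2"
proof -
  have "sin (a + b) * sin (a - b) = (sin a * cos b)^2 - (cos a * sin b)^2"
    by (simp only: sin_add sin_diff power2_eq_square) (simp add: algebra_simps)
  also have "\<dots> = sin a ^ 2 * (1 - sin b ^ 2) - (1 - sin a ^ 2) * sin b ^ 2"
    by (simp add: power_mult_distrib cos_squared_eq)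
  finally show ?thesis by (simp add: algebra_simps)
qed

lemma sin_mult_binom_sin_sum_0: "sin t * binom_sin_sum 0 n t = sin (real (n+1) * t) ^ 2"
proof (induction n)
  case 0
  then show ?case by (simp add: binom_sin_sum_def power2_eq_square)
next
  case (Suc n)
  have "binom_sin_sum 0 (Suc n) t = binom_sin_sum 0 n t + sin (real (2*n+3) * t)"
    by (simp add: binom_sin_sum_def algebra_simps)
  hence "sin t * binom_sin_sum 0 (Suc n) t
         = sin (real (n+1) * t) ^ 2 + sin t * sin (real (2*n+3) * t)"
    using Suc by (simp add: algebra_simps)
  also have "sin t * sin (real (2*n+3) * t) = sin (real (n+2) * t) ^ 2 - sin (real (n+1) * t) ^ 2"
    using sin_add_mult_sin_diff[of "real (n+2) * t" "real (n+1) * t"] by (simp add: algebra_simps)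
  finally show ?case by (simp add: add.commute)
qed

lemma binom_sin_sum_0_nonneg:
  assumes "0 < t" "t < pi"
  shows "binom_sin_sum 0 n t \<ge> 0"
proof -
  have "sin t > 0" using assms by (simp add: sin_gt_zero)
  moreover have "sin t * binom_sin_sum 0 n t \<ge> 0" by (simp add: sin_mult_binom_sin_sum_0)
  ultimately show ?thesis by (simp add: zero_le_mult_iff)
qed

lemma binom_sin_sum_Suc_Suc:
  "binom_sin_sum (Suc m) (Suc n) t = binom_sin_sum (Suc m) n t + binom_sin_sum m (Suc n) t"
proof -
  have pascal: "(Suc n - k + Suc m) choose (Suc m)
                = ((n - k + Suc m) choose (Suc m)) + ((Suc n - k + m) choose m)" if "k \<le> n" for k
  proof -
    have "Suc n - k + Suc m = Suc (n - k + Suc m)" "Suc n - k + m = n - k + Suc m"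
      using that by simp_all
    then show ?thesis by (simp only: binomial_Suc_Suc)
  qed
  have "binom_sin_sum (Suc m) (Suc n) t
        = (\<Sum>k=0..n. real ((Suc n - k + Suc m) choose (Suc m)) * sin (real (2*k+1) * t))
          + sin (real (2*Suc n+1) * t)"
    by (simp add: binom_sin_sum_def)
  also have "(\<Sum>k=0..n. real ((Suc n - k + Suc m) choose (Suc m)) * sin (real (2*k+1) * t))
             = (\<Sum>k=0..n. real ((n - k + Suc m) choose (Suc m)) * sin (real (2*k+1) * t))
               + (\<Sum>k=0..n. real ((Suc n - k + m) choose m) * sin (real (2*k+1) * t))"
    unfolding sum.distrib[symmetric]
    by (intro sum.cong refl) (simp only: pascal atLeastAtMost_iff of_nat_add distrib_right)
  finally show ?thesis by (simp add: binom_sin_sum_def)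
qed

lemma binom_sin_sum_nonneg:
  assumes "0 < t" "t < pi"
  shows "binom_sin_sum m n t \<ge> 0"
proof (induction m arbitrary: n)
  case 0
  show ?case using assms by (rule binom_sin_sum_0_nonneg)
next
  case (Suc m)
  note IH = Suc.IH
  show ?case
  proof (induction n)
    case 0
    show ?case using assms by (simp add: binom_sin_sum_def sin_ge_zero)
  next
    case (Suc n)
    then show ?case using binom_sin_sum_Suc_Suc[of m n t] IH[of "Suc n"] by simp
  qed
qed

lemma binom_sin_sum_pos:
  assumes "0 < t" "t < pi"
  shows "binom_sin_sum (Suc m) n t > 0"
proof (induction n)
  case 0
  show ?case using assms by (simp add: binom_sin_sum_def sin_gt_zero)
next
  case (Suc n)
  then show ?case
    using binom_sin_sum_Suc_Suc[of m n t] binom_sin_sum_nonneg[OF assms, of m "Suc n"] by simp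
qed

lemma has_real_derivative_binom_cos_sum:
  "(binom_cos_sum m n has_real_derivative - binom_sin_sum m n t) (at t)"
  unfolding binom_cos_sum_def binom_sin_sum_def sum_negf[symmetric]
proof (rule DERIV_sum)
  fix k
  show "((\<lambda>t. real ((n - k + m) choose m) * cos (real (2*k+1) * t) / real (2*k+1))
          has_real_derivative - (real ((n - k + m) choose m) * sin (real (2*k+1) * t))) (at t)"
    by (rule derivative_eq_intros refl | simp)+
qed

lemma binom_cos_sum_strict_decreasing:
  assumes "0 \<le> a" "a < b" "b \<le> pi"
  shows "binom_cos_sum (Suc m) n b < binom_cos_sum (Suc m) n a"
proof (rule DERIV_neg_imp_decreasing_open[OF \<open>a < b\<close>])
  fix t assume "a < t" "t < b"
  then show "\<exists>y. (binom_cos_sum (Suc m) n has_real_derivative y) (at t) \<and> y < 0"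
    using assms has_real_derivative_binom_cos_sum binom_sin_sum_pos[of t m n] by fastforce
next
  show "continuous_on {a..b} (binom_cos_sum (Suc m) n)"
    unfolding binom_cos_sum_def by (intro continuous_intros) auto
qed

lemma binom_cos_sum_minus: "binom_cos_sum m n (- t) = binom_cos_sum m n t"
  by (simp add: binom_cos_sum_def)

lemma binom_cos_sum_2pi_minus: "binom_cos_sum m n (2*pi - t) = binom_cos_sum m n t"
proof -
  have "cos (real (2*k+1) * (2*pi - t)) = cos (real (2*k+1) * t)" for k :: nat
  proof -
    have "real (2*k+1) * (2*pi - t) = 2 * real (2*k+1) * pi - real (2*k+1) * t"
      by (simp add: algebra_simps)
    then show ?thesis by (simp only: cos_diff cos_2npi sin_2npi)
  qed
  then show ?thesis by (simp add: binom_cos_sum_def)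
qed

lemma S_eq_binom_cos_sum_diff:
  "S m n x y = (binom_cos_sum m n (x - y) - binom_cos_sum m n (x + y)) / 2"
proof -
  have "S m n x y = (\<Sum>k=0..n.
          (real ((n - k + m) choose m) * cos (real (2*k+1) * (x - y)) / real (2*k+1)
           - real ((n - k + m) choose m) * cos (real (2*k+1) * (x + y)) / real (2*k+1)) / 2)"
    unfolding S_def sin_times_sin
    by (intro sum.cong) (simp_all add: right_diff_distrib distrib_left diff_divide_distrib)
  then show ?thesis
    unfolding binom_cos_sum_def by (simp add: sum_divide_distrib[symmetric] sum_subtractf)
qed

lemma S_pos:
  assumes "0 < x" "x < pi" "0 < y" "y < pi"
  shows "S (Suc m) n x y > 0"
proof -
  let ?C = "binom_cos_sum (Suc m) n"
  define v where "v = \<bar>x - y\<bar>"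
  define u where "u = (if x + y \<le> pi then x + y else 2*pi - (x + y))"
  have "?C (x - y) = ?C v"
    unfolding v_def by (metis abs_of_nonneg abs_of_nonpos binom_cos_sum_minus linear)
  moreover have "?C (x + y) = ?C u"
    unfolding u_def using binom_cos_sum_2pi_minus by simp
  moreover have "?C u < ?C v"
    using assms by (intro binom_cos_sum_strict_decreasing) (auto simp: u_def v_def)
  ultimately show ?thesis by (simp add: S_eq_binom_cos_sum_diff)
qed

lemma S_tendsto_0: "((\<lambda>x. S m n x y) \<longlongrightarrow> 0) (at_right 0)"
proof -
  have "((\<lambda>x. S m n x y) \<longlongrightarrow> S m n 0 y) (at_right 0)"
    unfolding S_def by (intro tendsto_intros) simp_all
  then show ?thesis by (simp add: S_def)
qed

theorem theorem4:
  fixes m :: nat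
  assumes "m \<ge> 1"
  shows "(\<forall>n::nat. \<forall>x y::real. n \<ge> 1 \<longrightarrow> 0 < x \<longrightarrow> x < pi \<longrightarrow> 0 < y \<longrightarrow> y < pi
            \<longrightarrow> S m n x y > 0)
       \<and> (\<forall>\<epsilon>>0. \<exists>n::nat. \<exists>x y::real. n \<ge> 1 \<and> 0 < x \<and> x < pi \<and> 0 < y \<and> y < pi
            \<and> S m n x y < \<epsilon>)"
proof
  obtain m' where m: "m = Suc m'" using assms by (cases m) auto
  show "\<forall>n::nat. \<forall>x y::real. n \<ge> 1 \<longrightarrow> 0 < x \<longrightarrow> x < pi \<longrightarrow> 0 < y \<longrightarrow> y < pi
          \<longrightarrow> S m n x y > 0"
    using S_pos unfolding m by blast
next
  show "\<forall>\<epsilon>>0. \<exists>n::nat. \<exists>x y::real. n \<ge> 1 \<and> 0 < x \<and> x < pi \<and> 0 < y \<and> y < pi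
          \<and> S m n x y < \<epsilon>"
  proof (intro allI impI)
    fix \<epsilon> :: real assume "\<epsilon> > 0"
    have "\<forall>\<^sub>F x in at_right 0. S m 1 x (pi/2) < \<epsilon>"
      using order_tendstoD(2)[OF S_tendsto_0 \<open>\<epsilon> > 0\<close>] .
    moreover have "\<forall>\<^sub>F x in at_right 0. 0 < x \<and> x < pi"
      using eventually_at_right_real[OF pi_gt_zero] by simp
    ultimately have "\<forall>\<^sub>F x in at_right 0. S m 1 x (pi/2) < \<epsilon> \<and> 0 < x \<and> x < pi"
      by eventually_elim simp
    then obtain x where "S m 1 x (pi/2) < \<epsilon>" "0 < x" "x < pi"
      using eventually_happens'[OF trivial_limit_at_right_real] by blast
    then show "\<exists>n::nat. \<exists>x y::real. n \<ge> 1 \<and> 0 < x \<and> x < pi \<and> 0 < y \<and> y < pi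
                 \<and> S m n x y < \<epsilon>"
      by (intro exI[of _ 1] exI[of _ x] exI[of _ "pi/2"]) auto
  qed
qed

end
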